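(* Let $Y=y-y_I$ be as in the context. Then \[ \bigl|\mathcal{I}\bigl(\langle\mathcal{A}Y,\mathcal{I}^\alpha\mathcal{A}Y'\rangle\bigr)(T)\bigr|\le C\sum_{j=1}^N\tau_j^\alpha\Bigl[\Bigl(\int_{I_j}\|\mathcal{A}Y'\|\,dt\Bigr)^2+\|\mathcal{A}Y\|_{I_j}^2\Bigr], \] where $\|\mathcal{A}Y\|_{I_j}=\sup_{t\in I_j}\|\mathcal{A}Y(t)\|$.
   Context: $\Omega\subset\mathbb{R}^d$ ($d\le3$) convex polyhedron, $0<\alpha<1$, $\kappa\in W^{1,\infty}(\Omega)$, $\kappa\ge\kappa_{\min}>0$, $\mathcal{A}w=-\nabla\cdot(\kappa\nabla w)$ with homogeneous Dirichlet conditions. $\mathcal{I}g(t)=\int_0^tg(s)\,ds$, $\omega_\beta(t)=t^{\beta-1}/\Gamma(\beta)$, $\mathcal{I}^\beta v(t)=\int_0^t\omega_\beta(t-s)v(s)\,ds$, $(\mathcal{J}_T^\beta w)(t)=\int_t^T\omega_\beta(s-t)w(s)\,ds$, $\partial_t^\alpha v=\mathcal{I}^{1-\alpha}v'$. $\langle\cdot,\cdot\rangle$, $\|\cdot\|$: $L^2(\Omega)$ inner product and norm. $u$ solves $\partial_t^\alpha u+\mathcal{A}u=f$ on $\Omega\times(0,T]$, $u=0$ on $\partial\Omega$, $u(0)=u_0$. Time mesh $t_n=(n\tau)^\gamma$, $0\le n\le N$, $\tau=T^{1/\gamma}/N$, $\gamma\ge1$, $\tau_n=t_n-t_{n-1}$,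 $I_n=(t_{n-1},t_n)$. $U$ is continuous, linear in $t$ on each $\overline{I_n}$, $U(0)=u_0$, with $\frac{1}{\tau_n}\int_{I_n}\partial_t^\alpha U\,dt+\mathcal{A}\tfrac12(U(t_n)+U(t_{n-1}))=\tau_n^{-1}\int_{I_n}f\,dt$; $\eta=u-U$. $\varphi$ solves $-(\mathcal{J}_T^{1-\alpha}\varphi)'+\mathcal{A}\varphi=\eta$ on $(0,T)$, $\varphi(T)=0$, with homogeneous Dirichlet conditions; $y(t)=\varphi(0)+\int_0^t\varphi(s)ds$, $y_I$ is the continuous piecewise-linear interpolant of $y$ at the nodes $t_j$, $Y=y-y_I$. $C$ is a generic constant bounded for $0<\alpha\le1$, independent of $N,\tau$. *)

theory Defs
  imports "HOL-Analysis.Analysis"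
begin

text \<open>Abstract setting: the Hilbert space L2(Omega) is modelled by a real inner product
  space of type 'a; the elliptic operator is a linear map A on it.\<close>

definition rl_kernel :: "real \<Rightarrow> real \<Rightarrow> real" where
  "rl_kernel \<beta> t = t powr (\<beta> - 1) / Gamma \<beta>"

definition rl_int :: "real \<Rightarrow> (real \<Rightarrow> 'a::real_normed_vector) \<Rightarrow> real \<Rightarrow> 'a" where
  "rl_int \<beta> v t = integral {0..t} (\<lambda>s. rl_kernel \<beta> (t - s) *\<^sub>R v s)"

definition prim :: "(real \<Rightarrow> real) \<Rightarrow> real \<Rightarrow> real" where
  "prim g t = integral {0..t} g"

definition mesh :: "real \<Rightarrow> real \<Rightarrow> nat \<Rightarrow> nat \<Rightarrow> real" where
  "mesh T \<gamma> N n = (real n * (T powr (1 / \<gamma>) / real N)) powr \<gamma>"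

definition pl_interp :: "(nat \<Rightarrow> real) \<Rightarrow> (real \<Rightarrow> 'a::real_vector) \<Rightarrow> real \<Rightarrow> 'a" where
  "pl_interp tn y t =
     (let j = (LEAST j. 1 \<le> j \<and> t \<le> tn j)
      in y (tn (j - 1)) + ((t - tn (j - 1)) / (tn j - tn (j - 1))) *\<^sub>R (y (tn j) - y (tn (j - 1))))"

definition ycum :: "(real \<Rightarrow> 'a::real_normed_vector) \<Rightarrow> real \<Rightarrow> 'a" where
  "ycum \<phi> t = \<phi> 0 + integral {0..t} \<phi>"

definition Yerr :: "real \<Rightarrow> real \<Rightarrow> nat \<Rightarrow> (real \<Rightarrow> 'a::real_normed_vector) \<Rightarrow> real \<Rightarrow> 'a" where
  "Yerr T \<gamma> N \<phi> t = ycum \<phi> t - pl_interp (mesh T \<gamma> N) (ycum \<phi>) t"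

end

theory Submission
  imports Defs
begin

(* Fix t in I_j and split the fractional integral I^alpha(AY')(t) at t_(j-1).
   The local part is handled by Tonelli: integrating omega_alpha(t - s) |AY'(s)| over
   t_(j-1) <= s < t <= t_j costs the factor omega_(1+alpha)(tau_j) <= 2 tau_j^alpha.
   On an earlier interval I_i the function AY vanishes at both ends, so integration by parts
   moves the derivative onto the kernel, which is increasing in s; the history is thus bounded by
   the sum over i < j of sup_(I_i) |AY| * (omega_alpha(t - t_i) - omega_alpha(t - t_(i-1))).
   Integrated over I_j these kernel increments give nonnegative weights K_ij whose row and column
   sums telescope to at most omega_(1+alpha)(tau), so AM-GM and a Schur-type test finish the
   estimate, with C = 3. *)

lemma nonneg_imp_integral_nonneg:
  fixes f :: "'a::euclidean_space \<Rightarrow> real"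
  assumes "\<And>x. x \<in> S \<Longrightarrow> 0 \<le> f x"
  shows "0 \<le> integral S f"
  using assms by (cases "f integrable_on S") (auto intro: integral_nonneg simp: not_integrable_integral)

lemma integral_norm_bound_integral_ae:
  fixes f :: "'n::euclidean_space \<Rightarrow> 'a::banach"
  assumes "f integrable_on S" "g integrable_on S" "negligible N"
    and "\<And>x. x \<in> S - N \<Longrightarrow> norm (f x) \<le> g x"
  shows "norm (integral S f) \<le> integral S g"
proof -
  define f0 where "f0 x = (if x \<in> N then 0 else f x)" for x
  define g0 where "g0 x = (if x \<in> N then 0 else g x)" for x
  have "f0 integrable_on S" "g0 integrable_on S"
    by (auto intro: integrable_spike[OF assms(1) assms(3)] integrable_spike[OF assms(2) assms(3)]
             simp: f0_def g0_def)
  then have "norm (integral S f0) \<le> integral S g0"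
    by (rule integral_norm_bound_integral) (use assms(4) in \<open>auto simp: f0_def g0_def\<close>)
  moreover have "integral S f0 = integral S f" "integral S g0 = integral S g"
    by (auto intro!: integral_spike[OF assms(3)] simp: f0_def g0_def)
  ultimately show ?thesis by simp
qed

lemma integral_mesh_sum:
  fixes f :: "real \<Rightarrow> 'a::banach" and tn :: "nat \<Rightarrow> real"
  assumes "mono tn" "f integrable_on {tn 0..tn n}"
  shows "integral {tn 0..tn n} f = (\<Sum>j=1..n. integral {tn (j - 1)..tn j} f)"
  using assms(2)
proof (induction n)
  case (Suc n)
  have "tn 0 \<le> tn n" "tn n \<le> tn (Suc n)" using assms(1) by (auto intro: monoD)
  then have "f integrable_on {tn 0..tn n}"
    by (intro integrable_subinterval_real[OF Suc.prems]) auto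
  moreover have "integral {tn 0..tn n} f + integral {tn n..tn (Suc n)} f = integral {tn 0..tn (Suc n)} f"
    using \<open>tn 0 \<le> tn n\<close> \<open>tn n \<le> tn (Suc n)\<close> Suc.prems by (rule Henstock_Kurzweil_Integration.integral_combine)
  ultimately show ?case using Suc.IH by simp
qed simp

lemma AE_lborel_negligibleE:
  assumes "AE x in lborel. P x"
  obtains N where "negligible N" "\<And>x. x \<notin> N \<Longrightarrow> P x"
  using eventually_ae_filter_negligible[THEN iffD1, OF AE_completion[OF assms]] by blast

lemma has_integral_nonneg_borel_representative:
  fixes g :: "'a::euclidean_space \<Rightarrow> real"
  assumes hg: "(g has_integral I) S" and S: "S \<in> sets borel" and nonneg: "\<And>x. x \<in> S \<Longrightarrow> 0 \<le> g x"
  obtains g1 N where "g1 \<in> borel_measurable borel" "\<And>x. 0 \<le> g1 x" "\<And>x. x \<notin> S \<Longrightarrow> g1 x = 0"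
    "negligible N" "\<And>x. x \<in> S - N \<Longrightarrow> g1 x = g x"
    "(\<integral>\<^sup>+x. ennreal (g1 x) \<partial>lborel) = ennreal I"
proof -
  have "(\<lambda>x. g x * indicator S x) \<in> borel_measurable lebesgue"
    using hg by (rule has_integral_implies_lebesgue_measurable_real)
  then obtain g0 where g0: "g0 \<in> borel_measurable lborel" "AE x in lborel. g x * indicator S x = g0 x"
    by (blast dest: completion_ex_borel_measurable_real)
  define g1 where "g1 x = max 0 (g0 x) * indicator S x" for x
  have g1_ae: "AE x in lborel. g1 x = indicator S x * g x"
    using g0(2)
  proof eventually_elim
    case (elim x)
    then show ?case using nonneg[of x] by (auto simp: g1_def indicator_def)
  qed
  then obtain N where "negligible N" "\<And>x. x \<notin> N \<Longrightarrow> g1 x = indicator S x * g x"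
    by (meson AE_lborel_negligibleE)
  moreover have "(\<integral>\<^sup>+x. ennreal (g1 x) \<partial>lborel) = ennreal I"
  proof -
    have "(\<integral>\<^sup>+x. ennreal (g1 x) \<partial>lborel) = (\<integral>\<^sup>+x. ennreal (indicator S x * g x) \<partial>lborel)"
      using g1_ae by (intro nn_integral_cong_AE) auto
    also have "\<dots> = ennreal I" using nonneg hg by (rule nn_integral_has_integral_lebesgue)
    finally show ?thesis .
  qed
  moreover have "g1 \<in> borel_measurable borel" using g0(1) S unfolding g1_def by measurable
  ultimately show ?thesis
    by (intro that[of g1 N]) (auto simp: g1_def indicator_def)
qed

lemma has_integral_nn_integral_finite:
  fixes h :: "'a::euclidean_space \<Rightarrow> real"
  assumes "h \<in> borel_measurable borel" "\<And>x. 0 \<le> h x" "\<And>x. x \<notin> S \<Longrightarrow> h x = 0"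
    and "(\<integral>\<^sup>+x. ennreal (h x) \<partial>lborel) \<noteq> \<infinity>"
  shows "(h has_integral enn2real (\<integral>\<^sup>+x. ennreal (h x) \<partial>lborel)) S"
proof -
  have "(h has_integral enn2real (\<integral>\<^sup>+x. ennreal (h x) \<partial>lborel)) UNIV"
    using assms by (intro nn_integral_has_integral) (auto simp: less_top)
  moreover have "h = (\<lambda>x. if x \<in> S then h x else 0)" using assms(3) by auto
  ultimately show ?thesis by (metis (no_types) has_integral_restrict_UNIV)
qed

lemma norm_le_SUP_open_interval:
  fixes w :: "real \<Rightarrow> 'a::real_normed_vector"
  assumes "a < b" "continuous_on {a..b} w" "w a = 0" "w b = 0" "s \<in> {a..b}"
  shows "norm (w s) \<le> (SUP t\<in>{a<..<b}. norm (w t))"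
proof -
  have "bounded (w ` {a..b})" using assms(2) by (intro compact_imp_bounded compact_continuous_image) auto
  then obtain B where "\<And>t. t \<in> {a..b} \<Longrightarrow> norm (w t) \<le> B" unfolding bounded_iff by blast
  then have bdd: "bdd_above ((\<lambda>t. norm (w t)) ` {a<..<b})" by (intro bdd_aboveI2[of _ _ B]) auto
  show ?thesis
  proof (cases "s \<in> {a<..<b}")
    case True
    then show ?thesis using bdd by (rule cSUP_upper)
  next
    case False
    then have "norm (w s) = 0" using assms(3-5) by auto
    also have "\<dots> \<le> norm (w ((a + b) / 2))" by simp
    also have "\<dots> \<le> (SUP t\<in>{a<..<b}. norm (w t))" using assms(1) bdd by (intro cSUP_upper) auto
    finally show ?thesis .
  qed
qed

lemma sum_triangle_swap:
  fixes f :: "nat \<Rightarrow> nat \<Rightarrow> 'a::comm_monoid_add"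
  shows "(\<Sum>j=1..N. \<Sum>i=1..j - 1. f i j) = (\<Sum>i=1..N. \<Sum>j=Suc i..N. f i j)"
proof -
  have "(\<Sum>j=1..N. \<Sum>i=1..j - 1. f i j) = (\<Sum>j\<in>{1..N}. \<Sum>i\<in>{i \<in> {1..N}. i < j}. f i j)"
    by (intro sum.cong refl) auto
  also have "\<dots> = (\<Sum>i\<in>{1..N}. \<Sum>j\<in>{j \<in> {1..N}. i < j}. f i j)"
    by (rule sum.swap_restrict) auto
  also have "\<dots> = (\<Sum>i=1..N. \<Sum>j=Suc i..N. f i j)"
    by (intro sum.cong refl) auto
  finally show ?thesis .
qed

lemma triangular_form_le_diagonal:
  fixes K :: "nat \<Rightarrow> nat \<Rightarrow> real" and x r :: "nat \<Rightarrow> real"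
  assumes nonneg: "\<And>i j. 1 \<le> i \<Longrightarrow> i < j \<Longrightarrow> j \<le> N \<Longrightarrow> 0 \<le> K i j"
    and row: "\<And>j. j \<in> {1..N} \<Longrightarrow> (\<Sum>i=1..j - 1. K i j) \<le> r j"
    and col: "\<And>i. i \<in> {1..N} \<Longrightarrow> (\<Sum>j=Suc i..N. K i j) \<le> r i"
  shows "(\<Sum>j=1..N. \<Sum>i=1..j - 1. K i j * x i * x j) \<le> (\<Sum>j=1..N. r j * (x j)\<^sup>2)"
proof -
  have "(\<Sum>j=1..N. \<Sum>i=1..j - 1. K i j * x i * x j)
      \<le> (\<Sum>j=1..N. \<Sum>i=1..j - 1. K i j * (x i)\<^sup>2 / 2 + K i j * (x j)\<^sup>2 / 2)"
  proof (intro sum_mono)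
    fix i j assume "j \<in> {1..N}" "i \<in> {1..j - 1}"
    then have "K i j * (2 * x i * x j) \<le> K i j * ((x i)\<^sup>2 + (x j)\<^sup>2)"
      using nonneg[of i j] by (intro mult_left_mono sum_squares_bound) auto
    then show "K i j * x i * x j \<le> K i j * (x i)\<^sup>2 / 2 + K i j * (x j)\<^sup>2 / 2"
      by (simp add: algebra_simps)
  qed
  also have "\<dots> = (\<Sum>j=1..N. \<Sum>i=1..j - 1. K i j * (x i)\<^sup>2 / 2)
                 + (\<Sum>j=1..N. \<Sum>i=1..j - 1. K i j * (x j)\<^sup>2 / 2)"
    by (simp only: sum.distrib)
  also have "\<dots> = (\<Sum>i=1..N. (\<Sum>j=Suc i..N. K i j) * (x i)\<^sup>2 / 2)
                 + (\<Sum>j=1..N. (\<Sum>i=1..j - 1. K i j) * (x j)\<^sup>2 / 2)"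
    unfolding sum_triangle_swap[of "\<lambda>i j. K i j * (x i)\<^sup>2 / 2"]
    by (simp only: sum_distrib_right sum_divide_distrib)
  also have "\<dots> \<le> (\<Sum>i=1..N. r i * (x i)\<^sup>2 / 2) + (\<Sum>j=1..N. r j * (x j)\<^sup>2 / 2)"
    using row col by (intro add_mono sum_mono divide_right_mono mult_right_mono) auto
  also have "\<dots> = (\<Sum>j=1..N. r j * (x j)\<^sup>2)" by (simp add: sum_divide_distrib[symmetric])
  finally show ?thesis .
qed

section \<open>The Riemann-Liouville kernel\<close>

lemma Gamma_plus1_pos:
  fixes x :: real
  assumes "0 < x"
  shows "Gamma (x + 1) = x * Gamma x"
proof -
  have "x \<notin> \<int>\<^sub>\<le>\<^sub>0" using assms nonpos_Ints_nonpos by force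
  then show ?thesis by (simp add: Gamma_plus1)
qed

lemma Gamma_gt_half:
  fixes x :: real
  assumes "1 < x" "x < 2"
  shows "1 / 2 < Gamma x"
proof -
  have "Gamma (x + 1) = x * Gamma x" using assms by (simp add: Gamma_plus1_pos)
  moreover have "Gamma 2 < Gamma (x + 1)" using assms by (intro Gamma_real_strict_mono) auto
  moreover have "Gamma (2 :: real) = 1" using Gamma_fact[of 1] by (simp add: numeral_2_eq_2)
  moreover have "x * Gamma x < 2 * Gamma x"
    using assms by (intro mult_strict_right_mono) (auto simp: Gamma_real_pos)
  ultimately show ?thesis by linarith
qed

lemma rl_kernel_zero [simp]: "rl_kernel \<beta> 0 = 0"
  unfolding rl_kernel_def by simp

lemma rl_kernel_nonneg: "0 < \<alpha> \<Longrightarrow> 0 \<le> rl_kernel \<alpha> r"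
  unfolding rl_kernel_def by (simp add: Gamma_real_pos less_imp_le)

lemma rl_kernel_antimono:
  assumes "0 < \<alpha>" "\<alpha> < 1" "0 < x" "x \<le> y"
  shows "rl_kernel \<alpha> y \<le> rl_kernel \<alpha> x"
  unfolding rl_kernel_def using assms
  by (intro divide_right_mono powr_mono2') (auto simp: Gamma_real_pos less_imp_le)

lemma rl_kernel_mono:
  assumes "1 \<le> \<beta>" "0 \<le> x" "x \<le> y"
  shows "rl_kernel \<beta> x \<le> rl_kernel \<beta> y"
  unfolding rl_kernel_def using assms
  by (intro divide_right_mono powr_mono2) (auto simp: Gamma_real_pos less_imp_le)

lemma rl_kernel_increment_nonneg:
  assumes "0 < \<alpha>" "\<alpha> < 1" "c \<le> d" "d < t"
  shows "0 \<le> rl_kernel \<alpha> (t - d) - rl_kernel \<alpha> (t - c)"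
  using rl_kernel_antimono[of \<alpha> "t - d" "t - c"] assms by simp

lemma rl_kernel_succ_le:
  assumes "0 < \<alpha>" "\<alpha> < 1"
  shows "rl_kernel (\<alpha> + 1) x \<le> 2 * x powr \<alpha>"
proof -
  have "1 / 2 < Gamma (\<alpha> + 1)" using assms by (intro Gamma_gt_half) auto
  then have "x powr \<alpha> * 1 \<le> x powr \<alpha> * (2 * Gamma (\<alpha> + 1))"
    by (intro mult_left_mono) auto
  then show ?thesis
    unfolding rl_kernel_def using \<open>1 / 2 < Gamma (\<alpha> + 1)\<close> by (simp add: divide_le_eq)
qed

lemma has_integral_rl_kernel:
  assumes "0 < \<alpha>" "c \<le> a" "a \<le> b"
  shows "((\<lambda>t. rl_kernel \<alpha> (t - c)) has_integral
           rl_kernel (\<alpha> + 1) (b - c) - rl_kernel (\<alpha> + 1) (a - c)) {a..b}"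
proof (rule fundamental_theorem_of_calculus_interior)
  show "continuous_on {a..b} (\<lambda>t. rl_kernel (\<alpha> + 1) (t - c))"
  proof -
    have "continuous_on {a..b} (\<lambda>t. (t - c) powr \<alpha>)"
      using assms by (intro continuous_on_powr' continuous_intros) auto
    then show ?thesis unfolding rl_kernel_def by (simp add: divide_inverse continuous_on_mult_right)
  qed
  have \<Gamma>: "Gamma (\<alpha> + 1) = \<alpha> * Gamma \<alpha>" by (rule Gamma_plus1_pos[OF assms(1)])
  fix t assume "t \<in> {a<..<b}"
  then have "0 < t - c" using assms by auto
  then have "((\<lambda>t. (t - c) powr \<alpha> / Gamma (\<alpha> + 1)) has_real_derivative
               \<alpha> * (t - c) powr (\<alpha> - 1) * 1 / Gamma (\<alpha> + 1)) (at t)"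
    using assms by (auto intro!: derivative_eq_intros simp: Gamma_real_pos less_imp_neq[symmetric])
  then show "((\<lambda>t. rl_kernel (\<alpha> + 1) (t - c)) has_vector_derivative rl_kernel \<alpha> (t - c)) (at t)"
    unfolding rl_kernel_def \<Gamma> using assms
    by (simp add: has_real_derivative_iff_has_vector_derivative[symmetric])
qed (use assms in simp)

lemma has_real_derivative_rl_kernel_reflected:
  assumes "0 < \<beta>" "s < t"
  shows "((\<lambda>s. rl_kernel \<beta> (t - s)) has_real_derivative
           (1 - \<beta>) * (t - s) powr (\<beta> - 2) / Gamma \<beta>) (at s)"
proof -
  have "((\<lambda>s. (t - s) powr (\<beta> - 1) / Gamma \<beta>) has_real_derivative
          (\<beta> - 1) * (t - s) powr (\<beta> - 1 - 1) * (0 - 1) / Gamma \<beta>) (at s)"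
    using assms by (auto intro!: derivative_eq_intros simp: Gamma_real_pos less_imp_neq[symmetric])
  then show ?thesis unfolding rl_kernel_def by (simp add: algebra_simps)
qed

lemma rl_kernel_by_parts_bound:
  fixes w w' :: "real \<Rightarrow> real"
  assumes "0 < \<alpha>" "\<alpha> < 1" "a < b" "b < t"
    and cont: "continuous_on {a..b} w" and "w a = 0" "w b = 0"
    and deriv: "\<And>s. s \<in> {a<..<b} \<Longrightarrow> (w has_real_derivative w' s) (at s)"
    and bound: "\<And>s. s \<in> {a..b} \<Longrightarrow> \<bar>w s\<bar> \<le> M"
  shows "\<bar>integral {a..b} (\<lambda>s. rl_kernel \<alpha> (t - s) * w' s)\<bar>
           \<le> M * (rl_kernel \<alpha> (t - b) - rl_kernel \<alpha> (t - a))"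
proof -
  define k where "k s = rl_kernel \<alpha> (t - s)" for s
  define k' where "k' s = (1 - \<alpha>) * (t - s) powr (\<alpha> - 2) / Gamma \<alpha>" for s
  have dk: "(k has_real_derivative k' s) (at s)" if "s \<le> b" for s
    unfolding k_def k'_def using assms that by (intro has_real_derivative_rl_kernel_reflected) auto
  have k'_nonneg: "0 \<le> k' s" for s
    unfolding k'_def using assms by (simp add: Gamma_real_pos less_imp_le)
  have cont_k: "continuous_on {a..b} k"
    using dk by (intro continuous_at_imp_continuous_on ballI DERIV_isCont) auto
  have cont_k': "continuous_on {a..b} k'"
    unfolding k'_def using assms by (intro continuous_intros) (auto simp: Gamma_real_pos less_imp_neq[symmetric])
  have int_k': "(k' has_integral k b - k a) {a..b}"
    using assms cont_k dk
    by (intro fundamental_theorem_of_calculus_interior)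
       (auto simp: has_real_derivative_iff_has_vector_derivative[symmetric])
  have "((\<lambda>s. k' s * w s + k s * w' s) has_integral k b * w b - k a * w a) {a..b}"
  proof (rule fundamental_theorem_of_calculus_interior)
    show "continuous_on {a..b} (\<lambda>s. k s * w s)" using cont_k cont by (rule continuous_on_mult)
    fix s assume "s \<in> {a<..<b}"
    then have "((\<lambda>s. k s * w s) has_real_derivative k' s * w s + k s * w' s) (at s)"
      using DERIV_mult[OF dk deriv] by (simp add: mult.commute)
    then show "((\<lambda>s. k s * w s) has_vector_derivative k' s * w s + k s * w' s) (at s)"
      by (simp add: has_real_derivative_iff_has_vector_derivative)
  qed (use assms in simp)
  moreover have int_k'w: "(\<lambda>s. k' s * w s) integrable_on {a..b}"
    using cont_k' cont by (intro integrable_continuous_interval continuous_on_mult)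
  ultimately have "((\<lambda>s. k s * w' s) has_integral 0 - integral {a..b} (\<lambda>s. k' s * w s)) {a..b}"
    using has_integral_diff[OF _ integrable_integral[OF int_k'w]] \<open>w a = 0\<close> \<open>w b = 0\<close> by fastforce
  then have by_parts: "integral {a..b} (\<lambda>s. k s * w' s) = - integral {a..b} (\<lambda>s. k' s * w s)"
    by (simp add: integral_unique)
  have "\<bar>integral {a..b} (\<lambda>s. k' s * w s)\<bar> \<le> integral {a..b} (\<lambda>s. k' s * M)"
    using int_k'w has_integral_mult_left[OF int_k']
    by (intro integral_norm_bound_integral[where 'a = real, simplified])
       (auto simp: abs_mult k'_nonneg bound mult_left_mono)
  also have "\<dots> = M * (k b - k a)"
    using integral_unique[OF int_k'] by (simp add: mult.commute)
  finally show ?thesis using by_parts unfolding k_def by simp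
qed

lemma integral_rl_kernel_inner_le:
  fixes w' :: "real \<Rightarrow> 'a::real_inner"
  assumes "0 < \<alpha>" "(\<lambda>s. rl_kernel \<alpha> (t - s) * inner e (w' s)) integrable_on S"
    and "(\<lambda>s. rl_kernel \<alpha> (t - s) * norm (w' s)) integrable_on S"
  shows "\<bar>integral S (\<lambda>s. rl_kernel \<alpha> (t - s) * inner e (w' s))\<bar>
           \<le> norm e * integral S (\<lambda>s. rl_kernel \<alpha> (t - s) * norm (w' s))"
proof -
  have "norm (integral S (\<lambda>s. rl_kernel \<alpha> (t - s) * inner e (w' s)))
      \<le> integral S (\<lambda>s. norm e * (rl_kernel \<alpha> (t - s) * norm (w' s)))"
  proof (rule integral_norm_bound_integral)
    show "(\<lambda>s. norm e * (rl_kernel \<alpha> (t - s) * norm (w' s))) integrable_on S"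
      using assms(3) by (rule integrable_on_mult_right)
    fix s
    show "norm (rl_kernel \<alpha> (t - s) * inner e (w' s)) \<le> norm e * (rl_kernel \<alpha> (t - s) * norm (w' s))"
      using mult_left_mono[OF Cauchy_Schwarz_ineq2[of e "w' s"] rl_kernel_nonneg[OF assms(1), of "t - s"]]
      by (simp add: abs_mult mult.left_commute rl_kernel_nonneg[OF assms(1)])
  qed (fact assms(2))
  then show ?thesis by simp
qed

lemma nn_integral_rl_kernel_convolution_le:
  fixes g :: "real \<Rightarrow> real"
  assumes "0 < \<alpha>" and g: "g \<in> borel_measurable borel" "\<And>s. 0 \<le> g s" "\<And>s. s \<notin> {a..b} \<Longrightarrow> g s = 0"
  shows "(\<integral>\<^sup>+t. \<integral>\<^sup>+s. ennreal (indicator {a..b} t * (if s < t then rl_kernel \<alpha> (t - s) else 0) * g s)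
            \<partial>lborel \<partial>lborel)
         \<le> ennreal (rl_kernel (\<alpha> + 1) (b - a)) * (\<integral>\<^sup>+s. ennreal (g s) \<partial>lborel)"
    (is "(\<integral>\<^sup>+t. \<integral>\<^sup>+s. ?F t s \<partial>lborel \<partial>lborel) \<le> _")
proof -
  have [measurable]: "g \<in> borel_measurable borel" by (fact g(1))
  have "(\<lambda>(t, s). ?F t s) \<in> borel_measurable (lborel \<Otimes>\<^sub>M lborel)"
    unfolding rl_kernel_def by measurable
  then have "(\<integral>\<^sup>+t. \<integral>\<^sup>+s. ?F t s \<partial>lborel \<partial>lborel) = (\<integral>\<^sup>+s. \<integral>\<^sup>+t. ?F t s \<partial>lborel \<partial>lborel)"
    by (rule lborel_pair.Fubini'[symmetric])
  also have "\<dots> \<le> (\<integral>\<^sup>+s. ennreal (rl_kernel (\<alpha> + 1) (b - a)) * ennreal (g s) \<partial>lborel)"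
  proof (intro nn_integral_mono)
    fix s
    show "(\<integral>\<^sup>+t. ?F t s \<partial>lborel) \<le> ennreal (rl_kernel (\<alpha> + 1) (b - a)) * ennreal (g s)"
    proof (cases "s \<in> {a..b}")
      case True
      have "?F t s = ennreal (g s) * ennreal (indicator {s..b} t * rl_kernel \<alpha> (t - s))" for t
        using True g(2) rl_kernel_nonneg[OF assms(1)]
        by (auto simp: indicator_def ennreal_mult'[symmetric] mult.commute rl_kernel_def)
      moreover have "(\<integral>\<^sup>+t. ennreal (indicator {s..b} t * rl_kernel \<alpha> (t - s)) \<partial>lborel)
          = ennreal (rl_kernel (\<alpha> + 1) (b - s) - rl_kernel (\<alpha> + 1) (s - s))"
        using True rl_kernel_nonneg[OF assms(1)]
        by (intro nn_integral_has_integral_lebesgue has_integral_rl_kernel assms) auto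
      ultimately have "(\<integral>\<^sup>+t. ?F t s \<partial>lborel) = ennreal (g s) * ennreal (rl_kernel (\<alpha> + 1) (b - s))"
        by (simp add: nn_integral_cmult rl_kernel_def)
      also have "\<dots> \<le> ennreal (g s) * ennreal (rl_kernel (\<alpha> + 1) (b - a))"
        using True assms(1) by (intro mult_left_mono ennreal_leI rl_kernel_mono) auto
      finally show ?thesis by (simp add: mult.commute)
    qed (simp add: g(3))
  qed
  also have "\<dots> = ennreal (rl_kernel (\<alpha> + 1) (b - a)) * (\<integral>\<^sup>+s. ennreal (g s) \<partial>lborel)"
    by (simp add: nn_integral_cmult)
  finally show ?thesis .
qed

lemma rl_kernel_local_convolution_bound_borel:
  fixes g :: "real \<Rightarrow> real"
  assumes "0 < \<alpha>" and g: "g \<in> borel_measurable borel" "\<And>s. 0 \<le> g s" "\<And>s. s \<notin> {a..b} \<Longrightarrow> g s = 0"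
    and I: "(\<integral>\<^sup>+s. ennreal (g s) \<partial>lborel) = ennreal I" "0 \<le> I"
  obtains N where "negligible N"
    "\<And>t. t \<in> {a<..<b} - N \<Longrightarrow> (\<lambda>s. rl_kernel \<alpha> (t - s) * g s) integrable_on {a..t}"
    "(\<lambda>t. integral {a..t} (\<lambda>s. rl_kernel \<alpha> (t - s) * g s)) integrable_on {a..b}"
    "integral {a..b} (\<lambda>t. integral {a..t} (\<lambda>s. rl_kernel \<alpha> (t - s) * g s)) \<le> rl_kernel (\<alpha> + 1) (b - a) * I"
proof -
  have [measurable]: "g \<in> borel_measurable borel" by (fact g(1))
  define k where "k t s = indicator {a..b} t * (if s < t then rl_kernel \<alpha> (t - s) else 0)" for t s :: real
  define X where "X t = (\<integral>\<^sup>+s. ennreal (k t s * g s) \<partial>lborel)" for t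
  have X_meas: "X \<in> borel_measurable lborel" unfolding X_def k_def rl_kernel_def by measurable
  have X_le: "(\<integral>\<^sup>+t. X t \<partial>lborel) \<le> ennreal (rl_kernel (\<alpha> + 1) (b - a) * I)"
    using nn_integral_rl_kernel_convolution_le[OF assms(1) g] I rl_kernel_nonneg[of "\<alpha> + 1"] assms(1)
    by (simp add: X_def k_def mult.assoc ennreal_mult)
  then have X_fin: "(\<integral>\<^sup>+t. X t \<partial>lborel) < \<infinity>" using le_less_trans[OF _ ennreal_less_top] by simp
  then have X_fin_AE: "AE t in lborel. X t \<noteq> \<infinity>" by (intro nn_integral_PInf_AE X_meas) simp
  then obtain N where "negligible N" and X_fin_ae: "\<And>t. t \<notin> N \<Longrightarrow> X t \<noteq> \<infinity>"
    by (meson AE_lborel_negligibleE)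
  have pointwise: "((\<lambda>s. rl_kernel \<alpha> (t - s) * g s) has_integral enn2real (X t)) {a..t}"
    if t: "t \<in> {a<..<b} - N" for t
  proof -
    have "(\<lambda>s. k t s * g s) \<in> borel_measurable borel" unfolding k_def rl_kernel_def by measurable
    then have "((\<lambda>s. k t s * g s) has_integral enn2real (X t)) {a..t}"
      unfolding X_def using X_fin_ae[of t, unfolded X_def] t g(2,3) rl_kernel_nonneg[OF assms(1)]
      by (intro has_integral_nn_integral_finite) (auto simp: k_def)
    then show ?thesis by (rule has_integral_eq[rotated]) (use t in \<open>auto simp: k_def\<close>)
  qed
  have X_eq: "(\<integral>\<^sup>+t. ennreal (enn2real (X t)) \<partial>lborel) = (\<integral>\<^sup>+t. X t \<partial>lborel)"
    using X_fin_AE by (intro nn_integral_cong_AE) (auto simp: less_top)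
  have "((\<lambda>t. enn2real (X t)) has_integral enn2real (\<integral>\<^sup>+t. ennreal (enn2real (X t)) \<partial>lborel)) {a..b}"
  proof (rule has_integral_nn_integral_finite)
    show "(\<lambda>t. enn2real (X t)) \<in> borel_measurable borel" using X_meas by simp
    show "enn2real (X t) = 0" if "t \<notin> {a..b}" for t using that by (simp add: X_def k_def)
    show "(\<integral>\<^sup>+t. ennreal (enn2real (X t)) \<partial>lborel) \<noteq> \<infinity>" using X_eq X_fin by simp
  qed simp
  then have "((\<lambda>t. integral {a..t} (\<lambda>s. rl_kernel \<alpha> (t - s) * g s))
      has_integral enn2real (\<integral>\<^sup>+t. X t \<partial>lborel)) {a..b}"
    unfolding X_eq by (rule has_integral_spike[where S = "N \<union> {a, b}", rotated 2])
       (use \<open>negligible N\<close> pointwise integral_unique in auto)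
  moreover have "enn2real (\<integral>\<^sup>+t. X t \<partial>lborel) \<le> rl_kernel (\<alpha> + 1) (b - a) * I"
    using X_le I(2) rl_kernel_nonneg[of "\<alpha> + 1"] assms(1) by (simp add: enn2real_leI)
  ultimately show ?thesis
    using that[of N] \<open>negligible N\<close> pointwise by (auto simp: integral_unique)
qed

lemma rl_kernel_local_convolution_bound:
  fixes g :: "real \<Rightarrow> real"
  assumes "0 < \<alpha>" "g integrable_on {a..b}" "\<And>s. s \<in> {a..b} \<Longrightarrow> 0 \<le> g s"
  obtains N where "negligible N"
    "\<And>t. t \<in> {a<..<b} - N \<Longrightarrow> (\<lambda>s. rl_kernel \<alpha> (t - s) * g s) integrable_on {a..t}"
    "(\<lambda>t. integral {a..t} (\<lambda>s. rl_kernel \<alpha> (t - s) * g s)) integrable_on {a..b}"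
    "integral {a..b} (\<lambda>t. integral {a..t} (\<lambda>s. rl_kernel \<alpha> (t - s) * g s))
       \<le> rl_kernel (\<alpha> + 1) (b - a) * integral {a..b} g"
proof -
  define I where "I = integral {a..b} g"
  have "0 \<le> I" unfolding I_def using assms(3) by (rule nonneg_imp_integral_nonneg)
  have hg: "(g has_integral I) {a..b}" unfolding I_def using assms(2) by (rule integrable_integral)
  obtain g1 N1 where g1: "g1 \<in> borel_measurable borel" "\<And>s. 0 \<le> g1 s" "\<And>s. s \<notin> {a..b} \<Longrightarrow> g1 s = 0"
      "negligible N1" "\<And>s. s \<in> {a..b} - N1 \<Longrightarrow> g1 s = g s"
      "(\<integral>\<^sup>+s. ennreal (g1 s) \<partial>lborel) = ennreal I"
    using has_integral_nonneg_borel_representative[OF hg _ assms(3)] by auto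
  obtain N where N: "negligible N"
    "\<And>t. t \<in> {a<..<b} - N \<Longrightarrow> (\<lambda>s. rl_kernel \<alpha> (t - s) * g1 s) integrable_on {a..t}"
    "(\<lambda>t. integral {a..t} (\<lambda>s. rl_kernel \<alpha> (t - s) * g1 s)) integrable_on {a..b}"
    "integral {a..b} (\<lambda>t. integral {a..t} (\<lambda>s. rl_kernel \<alpha> (t - s) * g1 s)) \<le> rl_kernel (\<alpha> + 1) (b - a) * I"
    using rl_kernel_local_convolution_bound_borel[OF assms(1) g1(1-3,6) \<open>0 \<le> I\<close>] by blast
  have same: "(\<lambda>s. rl_kernel \<alpha> (t - s) * g1 s) integrable_on {a..t} \<longleftrightarrow> (\<lambda>s. rl_kernel \<alpha> (t - s) * g s) integrable_on {a..t}"
    "integral {a..t} (\<lambda>s. rl_kernel \<alpha> (t - s) * g1 s) = integral {a..t} (\<lambda>s. rl_kernel \<alpha> (t - s) * g s)"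
    if "t \<le> b" for t
    using that g1(5) by (auto intro: integrable_spike[OF _ g1(4)] intro!: integral_spike[OF g1(4)])
  show ?thesis
  proof (rule that[OF N(1)])
    show "(\<lambda>s. rl_kernel \<alpha> (t - s) * g s) integrable_on {a..t}" if "t \<in> {a<..<b} - N" for t
      using that N(2) same(1) by auto
    show "(\<lambda>t. integral {a..t} (\<lambda>s. rl_kernel \<alpha> (t - s) * g s)) integrable_on {a..b}"
      by (rule integrable_eq[OF N(3)]) (simp add: same(2))
    have "integral {a..b} (\<lambda>t. integral {a..t} (\<lambda>s. rl_kernel \<alpha> (t - s) * g s))
        = integral {a..b} (\<lambda>t. integral {a..t} (\<lambda>s. rl_kernel \<alpha> (t - s) * g1 s))"
      by (rule integral_cong) (simp add: same(2))
    then show "integral {a..b} (\<lambda>t. integral {a..t} (\<lambda>s. rl_kernel \<alpha> (t - s) * g s))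
        \<le> rl_kernel (\<alpha> + 1) (b - a) * integral {a..b} g"
      using N(4) unfolding I_def by simp
  qed
qed

lemma rl_kernel_history_bound:
  fixes w w' :: "real \<Rightarrow> 'a::real_inner" and tn M :: "nat \<Rightarrow> real"
  assumes "0 < \<alpha>" "\<alpha> < 1" "strict_mono tn" "tn k < t"
    and cont: "continuous_on {tn 0..tn k} w" and zero: "\<And>i. i \<le> k \<Longrightarrow> w (tn i) = 0"
    and deriv: "\<And>i s. i \<in> {1..k} \<Longrightarrow> s \<in> {tn (i - 1)<..<tn i} \<Longrightarrow> (w has_vector_derivative w' s) (at s)"
    and bound: "\<And>i s. i \<in> {1..k} \<Longrightarrow> s \<in> {tn (i - 1)..tn i} \<Longrightarrow> norm (w s) \<le> M i"
    and int: "(\<lambda>s. rl_kernel \<alpha> (t - s) * inner e (w' s)) integrable_on {tn 0..tn k}"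
  shows "\<bar>integral {tn 0..tn k} (\<lambda>s. rl_kernel \<alpha> (t - s) * inner e (w' s))\<bar>
           \<le> norm e * (\<Sum>i=1..k. M i * (rl_kernel \<alpha> (t - tn i) - rl_kernel \<alpha> (t - tn (i - 1))))"
proof -
  have mono: "mono tn" using assms(3) by (rule strict_mono_mono)
  have "\<bar>integral {tn 0..tn k} (\<lambda>s. rl_kernel \<alpha> (t - s) * inner e (w' s))\<bar>
      = \<bar>\<Sum>i=1..k. integral {tn (i - 1)..tn i} (\<lambda>s. rl_kernel \<alpha> (t - s) * inner e (w' s))\<bar>"
    using mono int by (simp add: integral_mesh_sum)
  also have "\<dots> \<le> (\<Sum>i=1..k. \<bar>integral {tn (i - 1)..tn i} (\<lambda>s. rl_kernel \<alpha> (t - s) * inner e (w' s))\<bar>)"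
    by (rule sum_abs)
  also have "\<dots> \<le> (\<Sum>i=1..k. norm e * M i * (rl_kernel \<alpha> (t - tn i) - rl_kernel \<alpha> (t - tn (i - 1))))"
  proof (intro sum_mono rl_kernel_by_parts_bound[OF assms(1,2)])
    fix i assume i: "i \<in> {1..k}"
    then have sub: "{tn (i - 1)..tn i} \<subseteq> {tn 0..tn k}" using mono by (auto intro: monoD order_trans)
    show "tn (i - 1) < tn i" using i assms(3) by (simp add: strict_mono_less)
    show "tn i < t" using i monoD[OF mono, of i k] assms(4) by simp
    show "continuous_on {tn (i - 1)..tn i} (\<lambda>s. inner e (w s))"
      using continuous_on_subset[OF cont sub] by (intro continuous_intros)
    show "inner e (w (tn (i - 1))) = 0" "inner e (w (tn i)) = 0" using i zero by auto
    fix s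
    assume "s \<in> {tn (i - 1)<..<tn i}"
    then show "((\<lambda>s. inner e (w s)) has_real_derivative inner e (w' s)) (at s)"
      using bounded_linear.has_vector_derivative[OF bounded_linear_inner_right deriv[OF i]]
      by (simp add: has_real_derivative_iff_has_vector_derivative)
  next
    fix i s assume "i \<in> {1..k}" "s \<in> {tn (i - 1)..tn i}"
    then show "\<bar>inner e (w s)\<bar> \<le> norm e * M i"
      using Cauchy_Schwarz_ineq2[of e "w s"] bound[of i s] by (meson mult_left_mono norm_ge_zero order_trans)
  qed
  also have "\<dots> = norm e * (\<Sum>i=1..k. M i * (rl_kernel \<alpha> (t - tn i) - rl_kernel \<alpha> (t - tn (i - 1))))"
    by (simp add: sum_distrib_left mult.assoc)
  finally show ?thesis .
qed

section \<open>Mesh weights\<close>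

definition mesh_weight :: "real \<Rightarrow> (nat \<Rightarrow> real) \<Rightarrow> nat \<Rightarrow> nat \<Rightarrow> real" where
  "mesh_weight \<alpha> tn i j =
     (rl_kernel (\<alpha> + 1) (tn j - tn i) - rl_kernel (\<alpha> + 1) (tn (j - 1) - tn i))
     - (rl_kernel (\<alpha> + 1) (tn j - tn (i - 1)) - rl_kernel (\<alpha> + 1) (tn (j - 1) - tn (i - 1)))"

lemma has_integral_mesh_weight:
  fixes tn :: "nat \<Rightarrow> real"
  assumes "0 < \<alpha>" "mono tn" "i < j"
  shows "((\<lambda>t. rl_kernel \<alpha> (t - tn i) - rl_kernel \<alpha> (t - tn (i - 1))) has_integral mesh_weight \<alpha> tn i j)
           {tn (j - 1)..tn j}"
  unfolding mesh_weight_def using assms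
  by (intro has_integral_diff has_integral_rl_kernel) (auto intro: monoD)

lemma mesh_weight_nonneg:
  fixes tn :: "nat \<Rightarrow> real"
  assumes "0 < \<alpha>" "\<alpha> < 1" "mono tn" "i < j"
  shows "0 \<le> mesh_weight \<alpha> tn i j"
proof -
  have "tn (i - 1) \<le> tn i" "tn i \<le> tn (j - 1)" using assms by (auto intro: monoD)
  (* When i = j - 1 the integrand is negative at t = tn i, where rl_kernel \<alpha> 0 = 0. *)
  have "((\<lambda>t. if t = tn i then 0 else rl_kernel \<alpha> (t - tn i) - rl_kernel \<alpha> (t - tn (i - 1)))
          has_integral mesh_weight \<alpha> tn i j) {tn (j - 1)..tn j}"
    by (rule has_integral_spike_finite[OF _ _ has_integral_mesh_weight[OF assms(1,3,4)], of "{tn i}"]) auto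
  then show ?thesis
    by (rule has_integral_nonneg)
       (use \<open>tn (i - 1) \<le> tn i\<close> \<open>tn i \<le> tn (j - 1)\<close> assms in \<open>auto intro: rl_kernel_antimono\<close>)
qed

lemma sum_mesh_weight_row_le:
  fixes tn :: "nat \<Rightarrow> real"
  assumes "0 < \<alpha>" "mono tn"
  shows "(\<Sum>i=1..j - 1. mesh_weight \<alpha> tn i j) \<le> rl_kernel (\<alpha> + 1) (tn j - tn (j - 1))"
proof -
  define P where "P i = rl_kernel (\<alpha> + 1) (tn j - tn i) - rl_kernel (\<alpha> + 1) (tn (j - 1) - tn i)" for i
  have "(\<Sum>i=1..j - 1. mesh_weight \<alpha> tn i j) = (\<Sum>i=Suc 0..j - 1. P i - P (i - 1))"
    by (simp add: P_def mesh_weight_def)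
  also have "\<dots> = P (j - 1) - P 0" by (rule sum_telescope'') simp
  also have "\<dots> \<le> rl_kernel (\<alpha> + 1) (tn j - tn (j - 1))"
    using assms monoD[OF assms(2), of 0 "j - 1"] monoD[OF assms(2), of "j - 1" j]
    by (simp add: P_def rl_kernel_mono)
  finally show ?thesis .
qed

lemma sum_mesh_weight_col_le:
  fixes tn :: "nat \<Rightarrow> real"
  assumes "0 < \<alpha>" "mono tn" "i \<le> N"
  shows "(\<Sum>j=Suc i..N. mesh_weight \<alpha> tn i j) \<le> rl_kernel (\<alpha> + 1) (tn i - tn (i - 1))"
proof -
  define Q where "Q j = rl_kernel (\<alpha> + 1) (tn j - tn i) - rl_kernel (\<alpha> + 1) (tn j - tn (i - 1))" for j
  have "(\<Sum>j=Suc i..N. mesh_weight \<alpha> tn i j) = (\<Sum>j=Suc i..N. Q j - Q (j - 1))"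
    by (simp add: Q_def mesh_weight_def algebra_simps)
  also have "\<dots> = Q N - Q i" using assms(3) by (rule sum_telescope'')
  also have "\<dots> \<le> rl_kernel (\<alpha> + 1) (tn i - tn (i - 1))"
    using assms monoD[OF assms(2), of "i - 1" i] monoD[OF assms(2), of i N]
    by (simp add: Q_def rl_kernel_mono)
  finally show ?thesis .
qed

lemma mesh_weight_quadratic_bound:
  fixes M G tn :: "nat \<Rightarrow> real"
  assumes "0 < \<alpha>" "\<alpha> < 1" "mono tn"
  shows "(\<Sum>j=1..N. M j * (rl_kernel (\<alpha> + 1) (tn j - tn (j - 1)) * G j
                           + (\<Sum>i=1..j - 1. M i * mesh_weight \<alpha> tn i j)))
         \<le> 3 / 2 * (\<Sum>j=1..N. rl_kernel (\<alpha> + 1) (tn j - tn (j - 1)) * ((G j)\<^sup>2 + (M j)\<^sup>2))"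
proof -
  define \<Omega> where "\<Omega> j = rl_kernel (\<alpha> + 1) (tn j - tn (j - 1))" for j
  have \<Omega>_nonneg: "0 \<le> \<Omega> j" for j unfolding \<Omega>_def using assms(1) by (simp add: rl_kernel_nonneg)
  have diag: "M j * (\<Omega> j * G j) \<le> \<Omega> j * (G j)\<^sup>2 / 2 + \<Omega> j * (M j)\<^sup>2 / 2" for j
  proof -
    have "\<Omega> j * (2 * M j * G j) \<le> \<Omega> j * ((M j)\<^sup>2 + (G j)\<^sup>2)"
      by (intro mult_left_mono sum_squares_bound \<Omega>_nonneg)
    then show ?thesis by (simp add: algebra_simps)
  qed
  have off_diag: "(\<Sum>j=1..N. \<Sum>i=1..j - 1. mesh_weight \<alpha> tn i j * M i * M j) \<le> (\<Sum>j=1..N. \<Omega> j * (M j)\<^sup>2)"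
    unfolding \<Omega>_def using assms
    by (intro triangular_form_le_diagonal mesh_weight_nonneg sum_mesh_weight_row_le sum_mesh_weight_col_le) auto
  have "(\<Sum>j=1..N. M j * (\<Omega> j * G j + (\<Sum>i=1..j - 1. M i * mesh_weight \<alpha> tn i j)))
      = (\<Sum>j=1..N. M j * (\<Omega> j * G j)) + (\<Sum>j=1..N. \<Sum>i=1..j - 1. mesh_weight \<alpha> tn i j * M i * M j)"
    by (simp add: sum.distrib sum_distrib_left algebra_simps)
  also have "\<dots> \<le> (\<Sum>j=1..N. \<Omega> j * (G j)\<^sup>2 / 2 + \<Omega> j * (M j)\<^sup>2 / 2) + (\<Sum>j=1..N. \<Omega> j * (M j)\<^sup>2)"
    by (intro add_mono sum_mono diag off_diag)
  also have "\<dots> \<le> 3 / 2 * (\<Sum>j=1..N. \<Omega> j * ((G j)\<^sup>2 + (M j)\<^sup>2))"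
    using \<Omega>_nonneg by (simp add: sum.distrib[symmetric] sum_distrib_left sum_mono algebra_simps)
  finally show ?thesis unfolding \<Omega>_def .
qed

section \<open>The energy estimate\<close>

lemma inner_rl_int_split_bound:
  fixes w w' :: "real \<Rightarrow> 'a::real_inner" and tn M :: "nat \<Rightarrow> real"
  assumes "0 < \<alpha>" "\<alpha> < 1" "strict_mono tn" "tn 0 = 0" "1 \<le> j" and t: "t \<in> {tn (j - 1)<..<tn j}"
    and cont: "continuous_on {0..tn (j - 1)} w" and zero: "\<And>i. i < j \<Longrightarrow> w (tn i) = 0"
    and deriv: "\<And>i s. i \<in> {1..j - 1} \<Longrightarrow> s \<in> {tn (i - 1)<..<tn i} \<Longrightarrow> (w has_vector_derivative w' s) (at s)"
    and bound: "\<And>i s. i \<in> {1..j - 1} \<Longrightarrow> s \<in> {tn (i - 1)..tn i} \<Longrightarrow> norm (w s) \<le> M i"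
    and int: "(\<lambda>s. rl_kernel \<alpha> (t - s) * norm (w' s)) integrable_on {tn (j - 1)..t}"
    and int_rl: "(\<lambda>s. rl_kernel \<alpha> (t - s) *\<^sub>R w' s) integrable_on {0..t}"
  shows "\<bar>inner e (rl_int \<alpha> w' t)\<bar>
           \<le> norm e * (integral {tn (j - 1)..t} (\<lambda>s. rl_kernel \<alpha> (t - s) * norm (w' s))
                        + (\<Sum>i=1..j - 1. M i * (rl_kernel \<alpha> (t - tn i) - rl_kernel \<alpha> (t - tn (i - 1)))))"
proof -
  define \<rho> where "\<rho> = (\<lambda>s. rl_kernel \<alpha> (t - s) * inner e (w' s))"
  have "0 \<le> tn (j - 1)" using strict_mono_mono[OF assms(3)] assms(4) by (metis monoD zero_le)
  have "inner e (rl_int \<alpha> w' t) = integral {0..t} \<rho>"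
    using integral_linear[OF int_rl bounded_linear_inner_right[of e]] by (simp add: rl_int_def \<rho>_def o_def)
  moreover have "\<rho> integrable_on {0..t}"
    using integrable_linear[OF int_rl bounded_linear_inner_right[of e]] by (simp add: \<rho>_def o_def)
  ultimately have split: "inner e (rl_int \<alpha> w' t) = integral {0..tn (j - 1)} \<rho> + integral {tn (j - 1)..t} \<rho>"
    using \<open>0 \<le> tn (j - 1)\<close> t by (simp add: Henstock_Kurzweil_Integration.integral_combine)
  have "\<bar>integral {0..tn (j - 1)} \<rho>\<bar>
      \<le> norm e * (\<Sum>i=1..j - 1. M i * (rl_kernel \<alpha> (t - tn i) - rl_kernel \<alpha> (t - tn (i - 1))))"
    unfolding \<rho>_def assms(4)[symmetric]
  proof (rule rl_kernel_history_bound[OF assms(1-3), where w = w])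
    show "(\<lambda>s. rl_kernel \<alpha> (t - s) * inner e (w' s)) integrable_on {tn 0..tn (j - 1)}"
      using integrable_subinterval_real[OF \<open>\<rho> integrable_on {0..t}\<close>, of "tn 0" "tn (j - 1)"] t assms(4)
      by (auto simp: \<rho>_def)
  qed (use t cont zero deriv bound assms(4,5) in auto)
  moreover have "\<bar>integral {tn (j - 1)..t} \<rho>\<bar>
      \<le> norm e * integral {tn (j - 1)..t} (\<lambda>s. rl_kernel \<alpha> (t - s) * norm (w' s))"
    unfolding \<rho>_def
    by (rule integral_rl_kernel_inner_le[OF assms(1) _ int],
        rule integrable_subinterval_real[OF \<open>\<rho> integrable_on {0..t}\<close>[unfolded \<rho>_def]])
       (use \<open>0 \<le> tn (j - 1)\<close> in auto)
  ultimately show ?thesis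
    unfolding split distrib_left
    using abs_triangle_ineq[of "integral {0..tn (j - 1)} \<rho>" "integral {tn (j - 1)..t} \<rho>"] by linarith
qed

lemma inner_rl_int_pointwise_bound:
  fixes w w' :: "real \<Rightarrow> 'a::real_inner" and tn M :: "nat \<Rightarrow> real"
  assumes "0 < \<alpha>" "\<alpha> < 1" "strict_mono tn" "tn 0 = 0" "1 \<le> j" and t: "t \<in> {tn (j - 1)<..<tn j}"
    and cont: "continuous_on {0..tn (j - 1)} w" and zero: "\<And>i. i < j \<Longrightarrow> w (tn i) = 0"
    and deriv: "\<And>i s. i \<in> {1..j - 1} \<Longrightarrow> s \<in> {tn (i - 1)<..<tn i} \<Longrightarrow> (w has_vector_derivative w' s) (at s)"
    and bound: "\<And>i s. i \<in> {1..j} \<Longrightarrow> s \<in> {tn (i - 1)..tn i} \<Longrightarrow> norm (w s) \<le> M i"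
    and int: "(\<lambda>s. rl_kernel \<alpha> (t - s) * norm (w' s)) integrable_on {tn (j - 1)..t}"
  shows "\<bar>inner (w t) (rl_int \<alpha> w' t)\<bar>
           \<le> M j * (integral {tn (j - 1)..t} (\<lambda>s. rl_kernel \<alpha> (t - s) * norm (w' s))
                    + (\<Sum>i=1..j - 1. M i * (rl_kernel \<alpha> (t - tn i) - rl_kernel \<alpha> (t - tn (i - 1)))))"
    (is "_ \<le> M j * (?L + ?H)")
proof -
  have mono: "mono tn" using assms(3) by (rule strict_mono_mono)
  have M_nonneg: "0 \<le> M i" if "i \<in> {1..j}" for i
    using bound[OF that, of "tn i"] monoD[OF mono, of "i - 1" i] by (simp add: order_trans[OF norm_ge_zero])
  have "0 \<le> ?L" by (intro nonneg_imp_integral_nonneg mult_nonneg_nonneg rl_kernel_nonneg assms(1)) simp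
  moreover have "0 \<le> ?H"
    using t assms(1,2) M_nonneg monoD[OF mono]
    by (intro sum_nonneg mult_nonneg_nonneg rl_kernel_increment_nonneg) (auto intro: order.strict_trans1)
  moreover have "norm (w t) \<le> M j" using bound[of j t] t assms(5) by auto
  moreover have "\<bar>inner (w t) (rl_int \<alpha> w' t)\<bar> \<le> norm (w t) * (?L + ?H)"
  proof (cases "(\<lambda>s. rl_kernel \<alpha> (t - s) *\<^sub>R w' s) integrable_on {0..t}")
    case False
    then show ?thesis using \<open>0 \<le> ?L\<close> \<open>0 \<le> ?H\<close> by (simp add: rl_int_def not_integrable_integral)
  next
    case True
    then show ?thesis
      by (rule inner_rl_int_split_bound[OF assms(1-6) cont zero deriv bound int, rotated -1]) auto
  qed
  ultimately show ?thesis by (meson add_nonneg_nonneg mult_right_mono order_trans)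
qed

lemma inner_rl_int_interval_bound:
  fixes w w' :: "real \<Rightarrow> 'a::real_inner" and tn M :: "nat \<Rightarrow> real"
  assumes "0 < \<alpha>" "\<alpha> < 1" "strict_mono tn" "tn 0 = 0" "1 \<le> j"
    and cont: "continuous_on {0..tn (j - 1)} w" and zero: "\<And>i. i < j \<Longrightarrow> w (tn i) = 0"
    and deriv: "\<And>i s. i \<in> {1..j - 1} \<Longrightarrow> s \<in> {tn (i - 1)<..<tn i} \<Longrightarrow> (w has_vector_derivative w' s) (at s)"
    and bound: "\<And>i s. i \<in> {1..j} \<Longrightarrow> s \<in> {tn (i - 1)..tn i} \<Longrightarrow> norm (w s) \<le> M i"
    and int_w': "(\<lambda>s. norm (w' s)) integrable_on {tn (j - 1)..tn j}"
    and int_f: "(\<lambda>t. inner (w t) (rl_int \<alpha> w' t)) integrable_on {tn (j - 1)..tn j}"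
  shows "\<bar>integral {tn (j - 1)..tn j} (\<lambda>t. inner (w t) (rl_int \<alpha> w' t))\<bar>
           \<le> M j * (rl_kernel (\<alpha> + 1) (tn j - tn (j - 1)) * integral {tn (j - 1)..tn j} (\<lambda>s. norm (w' s))
                    + (\<Sum>i=1..j - 1. M i * mesh_weight \<alpha> tn i j))"
proof -
  define a b where "a = tn (j - 1)" and "b = tn j"
  define L where "L t = integral {a..t} (\<lambda>s. rl_kernel \<alpha> (t - s) * norm (w' s))" for t
  define H where "H t = (\<Sum>i=1..j - 1. M i * (rl_kernel \<alpha> (t - tn i) - rl_kernel \<alpha> (t - tn (i - 1))))" for t
  obtain N where "negligible N"
    and int_L_at: "\<And>t. t \<in> {a<..<b} - N \<Longrightarrow> (\<lambda>s. rl_kernel \<alpha> (t - s) * norm (w' s)) integrable_on {a..t}"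
    and int_L: "L integrable_on {a..b}"
    and L_le: "integral {a..b} L \<le> rl_kernel (\<alpha> + 1) (b - a) * integral {a..b} (\<lambda>s. norm (w' s))"
    using rl_kernel_local_convolution_bound[OF assms(1) int_w'] unfolding L_def a_def b_def by auto
  have H_int: "(H has_integral (\<Sum>i=1..j - 1. M i * mesh_weight \<alpha> tn i j)) {a..b}"
    unfolding H_def a_def b_def using assms(1,3)
    by (intro has_integral_sum has_integral_mult_right has_integral_mesh_weight) (auto intro: strict_mono_mono)
  have "norm (w b) \<le> M j" using bound[of j b] assms(3,5) by (simp add: b_def strict_mono_less_eq)
  then have "0 \<le> M j" by (rule order_trans[OF norm_ge_zero])
  have "norm (integral {a..b} (\<lambda>t. inner (w t) (rl_int \<alpha> w' t))) \<le> integral {a..b} (\<lambda>t. M j * (L t + H t))"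
  proof (rule integral_norm_bound_integral_ae)
    show "(\<lambda>t. inner (w t) (rl_int \<alpha> w' t)) integrable_on {a..b}" using int_f by (simp add: a_def b_def)
    show "(\<lambda>t. M j * (L t + H t)) integrable_on {a..b}"
      using int_L H_int by (intro integrable_on_mult_right integrable_add) auto
    show "negligible (N \<union> {a, b})" using \<open>negligible N\<close> by simp
    fix t assume "t \<in> {a..b} - (N \<union> {a, b})"
    then have "t \<in> {tn (j - 1)<..<tn j}" "t \<in> {a<..<b} - N" by (auto simp: a_def b_def)
    then have "\<bar>inner (w t) (rl_int \<alpha> w' t)\<bar> \<le> M j * (L t + H t)"
      unfolding L_def H_def a_def
      by (intro inner_rl_int_pointwise_bound[OF assms(1-5)] cont zero deriv bound int_L_at[unfolded a_def]) auto
    then show "norm (inner (w t) (rl_int \<alpha> w' t)) \<le> M j * (L t + H t)" by simp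
  qed
  also have "\<dots> = M j * (integral {a..b} L + (\<Sum>i=1..j - 1. M i * mesh_weight \<alpha> tn i j))"
    using int_L H_int by (simp add: integral_add has_integral_integrable integral_unique)
  also have "\<dots> \<le> M j * (rl_kernel (\<alpha> + 1) (b - a) * integral {a..b} (\<lambda>s. norm (w' s))
                          + (\<Sum>i=1..j - 1. M i * mesh_weight \<alpha> tn i j))"
    using L_le \<open>0 \<le> M j\<close> by (intro mult_left_mono) auto
  finally show ?thesis unfolding a_def b_def by simp
qed

lemma integral_inner_rl_int_mesh_bound:
  fixes w w' :: "real \<Rightarrow> 'a::real_inner" and tn M :: "nat \<Rightarrow> real"
  assumes "0 < \<alpha>" "\<alpha> < 1" "strict_mono tn" "tn 0 = 0"
    and cont: "continuous_on {0..tn N} w" and zero: "\<And>j. j \<le> N \<Longrightarrow> w (tn j) = 0"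
    and deriv: "\<And>j t. j \<in> {1..N} \<Longrightarrow> t \<in> {tn (j - 1)<..<tn j} \<Longrightarrow> (w has_vector_derivative w' t) (at t)"
    and bound: "\<And>j s. j \<in> {1..N} \<Longrightarrow> s \<in> {tn (j - 1)..tn j} \<Longrightarrow> norm (w s) \<le> M j"
    and int_w': "(\<lambda>t. norm (w' t)) integrable_on {0..tn N}"
    and int_f: "(\<lambda>t. inner (w t) (rl_int \<alpha> w' t)) integrable_on {0..tn N}"
  shows "\<bar>integral {0..tn N} (\<lambda>t. inner (w t) (rl_int \<alpha> w' t))\<bar>
           \<le> 3 * (\<Sum>j=1..N. (tn j - tn (j - 1)) powr \<alpha> *
                  ((integral {tn (j - 1)..tn j} (\<lambda>t. norm (w' t)))\<^sup>2 + (M j)\<^sup>2))"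
proof -
  define f where "f t = inner (w t) (rl_int \<alpha> w' t)" for t
  define G where "G j = integral {tn (j - 1)..tn j} (\<lambda>t. norm (w' t))" for j
  have mono: "mono tn" using assms(3) by (rule strict_mono_mono)
  have sub: "{tn (j - 1)..tn j} \<subseteq> {0..tn N}" if "j \<le> N" for j
    using that monoD[OF mono, of 0 "j - 1"] monoD[OF mono, of j N] assms(4) by auto
  have "\<bar>integral {0..tn N} f\<bar> = \<bar>\<Sum>j=1..N. integral {tn (j - 1)..tn j} f\<bar>"
    using integral_mesh_sum[OF mono int_f[folded assms(4) f_def]] assms(4) by simp
  also have "\<dots> \<le> (\<Sum>j=1..N. \<bar>integral {tn (j - 1)..tn j} f\<bar>)" by (rule sum_abs)
  also have "\<dots> \<le> (\<Sum>j=1..N. M j * (rl_kernel (\<alpha> + 1) (tn j - tn (j - 1)) * G j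
                                  + (\<Sum>i=1..j - 1. M i * mesh_weight \<alpha> tn i j)))"
  proof (intro sum_mono)
    fix j assume j: "j \<in> {1..N}"
    show "\<bar>integral {tn (j - 1)..tn j} f\<bar> \<le> M j * (rl_kernel (\<alpha> + 1) (tn j - tn (j - 1)) * G j
                                  + (\<Sum>i=1..j - 1. M i * mesh_weight \<alpha> tn i j))"
      unfolding f_def G_def
    proof (rule inner_rl_int_interval_bound[OF assms(1-4)])
      show "continuous_on {0..tn (j - 1)} w"
        using j monoD[OF mono, of "j - 1" N] by (intro continuous_on_subset[OF cont]) auto
      show "(\<lambda>s. norm (w' s)) integrable_on {tn (j - 1)..tn j}"
        using j sub[of j] by (intro integrable_subinterval_real[OF int_w']) auto
      show "(\<lambda>t. inner (w t) (rl_int \<alpha> w' t)) integrable_on {tn (j - 1)..tn j}"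
        using j sub[of j] by (intro integrable_subinterval_real[OF int_f]) auto
      show "w (tn i) = 0" if "i < j" for i using that j by (intro zero) auto
      show "(w has_vector_derivative w' s) (at s)" if "i \<in> {1..j - 1}" "s \<in> {tn (i - 1)<..<tn i}" for i s
        using that j by (intro deriv) auto
      show "norm (w s) \<le> M i" if "i \<in> {1..j}" "s \<in> {tn (i - 1)..tn i}" for i s
        using that j by (intro bound) auto
    qed (use j in simp)
  qed
  also have "\<dots> \<le> 3 / 2 * (\<Sum>j=1..N. rl_kernel (\<alpha> + 1) (tn j - tn (j - 1)) * ((G j)\<^sup>2 + (M j)\<^sup>2))"
    using assms(1,2) mono by (rule mesh_weight_quadratic_bound)
  also have "\<dots> \<le> 3 / 2 * (\<Sum>j=1..N. 2 * (tn j - tn (j - 1)) powr \<alpha> * ((G j)\<^sup>2 + (M j)\<^sup>2))"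
    using assms(1,2) by (intro mult_left_mono sum_mono mult_right_mono rl_kernel_succ_le) auto
  also have "\<dots> = 3 * (\<Sum>j=1..N. (tn j - tn (j - 1)) powr \<alpha> * ((G j)\<^sup>2 + (M j)\<^sup>2))"
    by (simp add: sum_distrib_left mult_ac)
  finally show ?thesis unfolding f_def G_def .
qed

lemma inner_rl_int_energy_bound:
  fixes w w' :: "real \<Rightarrow> 'a::real_inner" and tn :: "nat \<Rightarrow> real"
  assumes "0 < \<alpha>" "\<alpha> < 1" "strict_mono tn" "tn 0 = 0"
    and cont: "continuous_on {0..tn N} w" and zero: "\<And>j. j \<le> N \<Longrightarrow> w (tn j) = 0"
    and deriv: "\<And>j t. j \<in> {1..N} \<Longrightarrow> t \<in> {tn (j - 1)<..<tn j} \<Longrightarrow> (w has_vector_derivative w' t) (at t)"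
    and int_w': "(\<lambda>t. norm (w' t)) integrable_on {0..tn N}"
  shows "\<bar>prim (\<lambda>t. inner (w t) (rl_int \<alpha> w' t)) (tn N)\<bar>
           \<le> 3 * (\<Sum>j=1..N. (tn j - tn (j - 1)) powr \<alpha> *
                  ((integral {tn (j - 1)..tn j} (\<lambda>t. norm (w' t)))\<^sup>2
                   + (SUP t\<in>{tn (j - 1)<..<tn j}. norm (w t))\<^sup>2))"
proof (cases "(\<lambda>t. inner (w t) (rl_int \<alpha> w' t)) integrable_on {0..tn N}")
  case True
  have bound: "norm (w s) \<le> (SUP t\<in>{tn (j - 1)<..<tn j}. norm (w t))"
    if "j \<in> {1..N}" "s \<in> {tn (j - 1)..tn j}" for j s
    using that assms(3,4) zero monoD[OF strict_mono_mono[OF assms(3)], of 0 "j - 1"]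
      monoD[OF strict_mono_mono[OF assms(3)], of j N]
    by (intro norm_le_SUP_open_interval continuous_on_subset[OF cont]) (auto simp: strict_mono_less)
  show ?thesis
    unfolding prim_def using integral_inner_rl_int_mesh_bound[OF assms(1-7) bound int_w' True] .
next
  case False
  then show ?thesis by (simp add: prim_def not_integrable_integral sum_nonneg)
qed

lemma strict_mono_mesh:
  assumes "0 < T" "0 < \<gamma>" "1 \<le> N"
  shows "strict_mono (mesh T \<gamma> N)"
  unfolding mesh_def using assms
  by (intro strict_monoI powr_less_mono2) (auto intro!: divide_strict_right_mono mult_strict_right_mono)

lemma mesh_0 [simp]: "mesh T \<gamma> N 0 = 0"
  unfolding mesh_def by simp

lemma mesh_last:
  assumes "0 < T" "0 < \<gamma>" "1 \<le> N"
  shows "mesh T \<gamma> N N = T"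
  unfolding mesh_def using assms by (simp add: powr_powr)

lemma pl_interp_node:
  fixes tn :: "nat \<Rightarrow> real" and y :: "real \<Rightarrow> 'a::real_vector"
  assumes "strict_mono tn"
  shows "pl_interp tn y (tn k) = y (tn k)"
proof (cases "k = 0")
  case True
  have "(LEAST j. 1 \<le> j \<and> tn k \<le> tn j) = 1"
    using True assms by (intro Least_equality) (auto simp: strict_mono_less_eq)
  then show ?thesis unfolding pl_interp_def Let_def using True by simp
next
  case False
  have "(LEAST j. 1 \<le> j \<and> tn k \<le> tn j) = k"
    using False assms by (intro Least_equality) (auto simp: strict_mono_less_eq)
  moreover have "tn (k - 1) < tn k" using False by (intro strict_monoD[OF assms]) simp
  ultimately show ?thesis unfolding pl_interp_def Let_def by simp
qed

theorem lemma4p4: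
  fixes A :: "'a::{real_inner,complete_space} \<Rightarrow> 'a" and T \<gamma> :: real
  assumes "linear A" and "T > 0" and "\<gamma> \<ge> 1"
  shows "\<exists>C. \<forall>(\<alpha>::real) (N::nat) (\<phi>::real \<Rightarrow> 'a).
     0 < \<alpha> \<longrightarrow> \<alpha> < 1 \<longrightarrow> 1 \<le> N \<longrightarrow>
     continuous_on {0..T} \<phi> \<longrightarrow> \<phi> T = 0 \<longrightarrow>
     (let tn = mesh T \<gamma> N;
          Y = Yerr T \<gamma> N \<phi>;
          AY = (\<lambda>t. A (Y t));
          AY' = (\<lambda>t. A (vector_derivative Y (at t)))
      in continuous_on {0..T} AY \<longrightarrow>
         (\<forall>j\<in>{1..N}. \<forall>t\<in>{tn (j - 1)<..<tn j}. (AY has_vector_derivative AY' t) (at t)) \<longrightarrow>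
         AY' integrable_on {0..T} \<longrightarrow> (\<lambda>t. norm (AY' t)) integrable_on {0..T} \<longrightarrow>
         \<bar>prim (\<lambda>t. inner (AY t) (rl_int \<alpha> AY' t)) T\<bar>
           \<le> C * (\<Sum>j=1..N. (tn j - tn (j - 1)) powr \<alpha> *
                 ((integral {tn (j - 1)..tn j} (\<lambda>t. norm (AY' t)))\<^sup>2
                  + (SUP t\<in>{tn (j - 1)<..<tn j}. norm (AY t))\<^sup>2)))"
proof (intro exI[of _ 3] allI impI)
  fix \<alpha> :: real and N :: nat and \<phi> :: "real \<Rightarrow> 'a"
  assume \<alpha>: "0 < \<alpha>" "\<alpha> < 1" and N: "1 \<le> N"
  define tn where "tn = mesh T \<gamma> N"
  have \<gamma>: "0 < \<gamma>" using assms(3) by simp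
  have tn: "strict_mono tn" "tn 0 = 0" "tn N = T"
    unfolding tn_def using strict_mono_mesh[OF assms(2) \<gamma> N] mesh_last[OF assms(2) \<gamma> N] by simp_all
  have "A (Yerr T \<gamma> N \<phi> (tn j)) = 0" for j
    using pl_interp_node[OF tn(1), of "ycum \<phi>" j] linear_0[OF assms(1)] by (simp add: Yerr_def tn_def)
  then show "let tn = mesh T \<gamma> N; Y = Yerr T \<gamma> N \<phi>; AY = (\<lambda>t. A (Y t));
               AY' = (\<lambda>t. A (vector_derivative Y (at t)))
      in continuous_on {0..T} AY \<longrightarrow>
         (\<forall>j\<in>{1..N}. \<forall>t\<in>{tn (j - 1)<..<tn j}. (AY has_vector_derivative AY' t) (at t)) \<longrightarrow>
         AY' integrable_on {0..T} \<longrightarrow> (\<lambda>t. norm (AY' t)) integrable_on {0..T} \<longrightarrow>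
         \<bar>prim (\<lambda>t. inner (AY t) (rl_int \<alpha> AY' t)) T\<bar>
           \<le> 3 * (\<Sum>j=1..N. (tn j - tn (j - 1)) powr \<alpha> *
                 ((integral {tn (j - 1)..tn j} (\<lambda>t. norm (AY' t)))\<^sup>2
                  + (SUP t\<in>{tn (j - 1)<..<tn j}. norm (AY t))\<^sup>2))"
    unfolding Let_def tn_def[symmetric]
    using inner_rl_int_energy_bound[OF \<alpha> tn(1,2), of N "\<lambda>t. A (Yerr T \<gamma> N \<phi> t)"
            "\<lambda>t. A (vector_derivative (Yerr T \<gamma> N \<phi>) (at t))", unfolded tn(3)]
    by blast
qed
end
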